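(* For all integers $I\ge 0$ and $S\ge 1$, the probability $P(I,S)$ that a fixed clean device $w_t$ ends up paired with an infected device in the pairing process described in the context equals $$P(I,S)=\sum_{j=L(I,S)}^{\lfloor I/2\rfloor}\pi(I,S,j)\,N(I,S,j)\,M(I,S,j),$$ where $L$, $\pi$, $N$, $M$ are the explicit functions defined in the context.
   Context: Pairing process: let $I,S\ge 0$ be integers. There are $I$ infected devices $b_1,\dots,b_I$ and $S$ clean devices $w_1,\dots,w_S$. For $t=1,\dots,I$ in this order: if $b_t$ is not yet paired and at least one device other than $b_t$ is not yet paired, then $b_t$ chooses one of the currently unpaired devices other than itself uniformly at random, independently of previous choices, and becomes paired with it; otherwise $b_t$ does nothing. Each device belongs to at most one pair. A clean device paired with an infected device becomes infected. Notation. Say that $(I,S,j)$ is in the dagger case if $I>S$, $I+S$ is odd and $j=\frac{I-S-1}{2}$. Set $L(I,S)=0$ if $I\le S$; $L(I,S)=\frac{I-S}{2}$ if $I>S$ and $I-S$ is even; $L(I,S)=\frac{I-S-1}{2}$ if $I>S$ and $I-S$ is odd. Let $z=1$ in the dagger case and $z=0$ otherwise, and put $$\pi(I,S,j)=\prod_{k=0}^{I-j-1-z}\frac{1}{I+S-1-2k}.$$ Outside the dagger case, $N(I,S,j)=\frac{1}{j!}\prod_{k=1}^{j}\binom{I-2(k-1)}{2}$. In the dagger case: $N(I,S,0)=1$; $N(I,S,1)=\binom{I}{2}-1$; and for $j\ge 2$, $N(I,S,j)=\sum_{h=S+1}^{I}N_\dagger(I,S,h)$, where $N_\dagger(I,S,I)=\frac{1}{j!}\prod_{k=0}^{j-1}\binom{I-1-2k}{2}$,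 $N_\dagger(I,S,I-1)=\frac{1}{(j-1)!}(I-2)\prod_{k=0}^{j-2}\binom{I-3-2k}{2}$, and for $S+1\le h\le I-2$: $N_\dagger(I,S,h)=0$ if $j<I-h$; $N_\dagger(I,S,h)=\prod_{k=1}^{I-h}(h-k)$ if $j=I-h$; and $N_\dagger(I,S,h)=\frac{1}{(j-I+h)!}\prod_{k=1}^{I-h}(h-k)\prod_{d=1}^{j-I+h}\binom{2h-I-1-2(d-1)}{2}$ if $j>I-h$. Finally $M(I,S,j)=S!$ in the dagger case and $M(I,S,j)=(I-2j)!\binom{S-1}{I-1-2j}$ otherwise, with the convention $\binom{A}{B}=0$ when $B<0$. *)

theory Defs
  imports "HOL-Probability.Probability"
begin

text \<open>Devices are natural numbers: infected devices b_1..b_I are 0..I-1 (b_t is t-1),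
clean devices w_1..w_S are I..I+S-1.  The state of the process is the set of
currently unpaired devices.\<close>

definition pair_step :: "nat \<Rightarrow> nat set \<Rightarrow> nat set pmf" where
  "pair_step t U =
     (if t \<in> U \<and> U - {t} \<noteq> {}
      then map_pmf (\<lambda>c. U - {t, c}) (pmf_of_set (U - {t}))
      else return_pmf U)"

definition pairing_process :: "nat \<Rightarrow> nat \<Rightarrow> nat set pmf" where
  "pairing_process I S =
     fold (\<lambda>t p. bind_pmf p (pair_step t)) [0..<I] (return_pmf {0..<I+S})"

text \<open>Clean devices never choose, so a clean device w is paired (necessarily with an
infected device) iff it is no longer unpaired at the end.\<close>
definition P_infect :: "nat \<Rightarrow> nat \<Rightarrow> nat \<Rightarrow> real" where
  "P_infect I S w = measure_pmf.prob (pairing_process I S) {U. w \<notin> U}"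

definition dagger :: "nat \<Rightarrow> nat \<Rightarrow> nat \<Rightarrow> bool" where
  "dagger I S j \<longleftrightarrow> I > S \<and> odd (I + S) \<and> int j * 2 = int I - int S - 1"

definition Lb :: "nat \<Rightarrow> nat \<Rightarrow> nat" where
  "Lb I S = (if I \<le> S then 0 else if even (I - S) then (I - S) div 2 else (I - S - 1) div 2)"

definition zz :: "nat \<Rightarrow> nat \<Rightarrow> nat \<Rightarrow> int" where
  "zz I S j = (if dagger I S j then 1 else 0)"

definition piF :: "nat \<Rightarrow> nat \<Rightarrow> nat \<Rightarrow> real" where
  "piF I S j = (\<Prod>k\<in>{0..int I - int j - 1 - zz I S j}.
                  1 / real_of_int (int I + int S - 1 - 2 * k))"

definition c2 :: "real \<Rightarrow> real" where
  "c2 x = x gchoose 2"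

definition Ndag :: "nat \<Rightarrow> nat \<Rightarrow> nat \<Rightarrow> nat \<Rightarrow> real" where
  "Ndag I S j h =
    (if h = I then
       (1 / fact j) * (\<Prod>k\<in>{0..int j - 1}. c2 (real I - 1 - 2 * real_of_int k))
     else if h = I - 1 then
       (1 / fact (j - 1)) * (real I - 2) *
         (\<Prod>k\<in>{0..int j - 2}. c2 (real I - 3 - 2 * real_of_int k))
     else if j < I - h then 0
     else if j = I - h then
       (\<Prod>k\<in>{1..int I - int h}. real h - real_of_int k)
     else
       (1 / fact (j - (I - h))) * (\<Prod>k\<in>{1..int I - int h}. real h - real_of_int k) *
         (\<Prod>d\<in>{1..int j - int I + int h}.
             c2 (2 * real h - real I - 1 - 2 * (real_of_int d - 1))))"

definition NF :: "nat \<Rightarrow> nat \<Rightarrow> nat \<Rightarrow> real" where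
  "NF I S j =
    (if dagger I S j then
       (if j = 0 then 1
        else if j = 1 then c2 (real I) - 1
        else (\<Sum>h\<in>{S+1..I}. Ndag I S j h))
     else (1 / fact j) * (\<Prod>k\<in>{1..j}. c2 (real I - 2 * (real k - 1))))"

definition binomZ :: "int \<Rightarrow> int \<Rightarrow> real" where
  "binomZ A B = (if B < 0 then 0 else real_of_int A gchoose nat B)"

definition MF :: "nat \<Rightarrow> nat \<Rightarrow> nat \<Rightarrow> real" where
  "MF I S j =
    (if dagger I S j then fact S
     else fact (I - 2 * j) * binomZ (int S - 1) (int I - 1 - 2 * int j))"

end

theory Submission
  imports Defs
begin

text \<open>
Conditioning on the choice of the first infected device, the probability that a fixed clean device
ends up paired satisfies a first-step recursion in (I, S).  The right-hand side is the expected
number of infected clean devices, divided by S, under an explicit outcome distribution: either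
the infected devices form j pairs among themselves and all others are matched with distinct clean
devices, or (when I = S + 1 + 2j) all clean devices are infected and one infected device is left
over.  These outcome probabilities obey the same first-step recursion and sum to 1, hence the
expected count obeys the recursion of S times the infection probability; finally the factors
\<pi>, N, M are identified with these probabilities term by term.
\<close>

section \<open>First-step analysis of the process\<close>

lemma measure_bind_pmf_of_set:
  assumes "finite A" "A \<noteq> {}"
  shows "measure_pmf.prob (bind_pmf (pmf_of_set A) f) E
           = (\<Sum>x\<in>A. measure_pmf.prob (f x) E) / card A"
proof -
  have "ennreal (measure_pmf.prob (bind_pmf (pmf_of_set A) f) E)
      = (\<Sum>x\<in>A. ennreal (measure_pmf.prob (f x) E)) / of_nat (card A)"
    using assms by (simp add: measure_pmf.emeasure_eq_measure[symmetric] nn_integral_pmf_of_set)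
  also have "\<dots> = ennreal ((\<Sum>x\<in>A. measure_pmf.prob (f x) E) / card A)"
    using assms by (simp add: divide_ennreal card_gt_0_iff ennreal_of_nat_eq_real_of_nat sum_nonneg)
  finally show ?thesis by (simp add: sum_nonneg)
qed

primrec pairing_run :: "nat list \<Rightarrow> nat set \<Rightarrow> nat set pmf" where
  "pairing_run [] U = return_pmf U"
| "pairing_run (t # ts) U = bind_pmf (pair_step t U) (pairing_run ts)"

lemma fold_pair_step_eq_bind_pairing_run:
  "fold (\<lambda>t p. bind_pmf p (pair_step t)) ts p = bind_pmf p (pairing_run ts)"
proof (induction ts arbitrary: p)
  case Nil
  have "pairing_run [] = return_pmf" by (rule ext) simp
  then show ?case by (simp add: bind_return_pmf')
next
  case (Cons t ts)
  have "pairing_run (t # ts) = (\<lambda>U. bind_pmf (pair_step t U) (pairing_run ts))" by (rule ext) simp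
  then show ?case using Cons.IH by (simp add: bind_assoc_pmf)
qed

lemma pairing_process_eq_run: "pairing_process I S = pairing_run [0..<I] {0..<I+S}"
  by (simp add: pairing_process_def fold_pair_step_eq_bind_pairing_run bind_return_pmf)

lemma set_pmf_pairing_run_subset: "V \<in> set_pmf (pairing_run ts U) \<Longrightarrow> V \<subseteq> U"
  by (induction ts arbitrary: U) (fastforce simp: pair_step_def split: if_splits)+

lemma prob_pairing_run_paired:
  "w \<notin> U \<Longrightarrow> measure_pmf.prob (pairing_run ts U) {V. w \<notin> V} = 1"
  by (subst measure_pmf.prob_eq_1) (auto simp: AE_measure_pmf_iff dest!: set_pmf_pairing_run_subset)

lemma prob_pairing_run_choose:
  assumes "t \<in> U" "finite U" "U - {t} \<noteq> {}"
  shows "measure_pmf.prob (pairing_run (t # ts) U) E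
           = (\<Sum>c\<in>U - {t}. measure_pmf.prob (pairing_run ts (U - {t, c})) E) / card (U - {t})"
  using assms by (simp add: pair_step_def bind_map_pmf measure_bind_pmf_of_set)

lemma prob_pairing_run_skip:
  "t \<notin> U \<Longrightarrow> pairing_run (t # ts) U = pairing_run ts U"
  by (simp add: pair_step_def bind_return_pmf)

text \<open>
\<open>infection_prob a c\<close> is the probability that a fixed clean device ends up paired when \<open>a\<close>
unpaired infected devices are still to choose and \<open>c\<close> clean devices, the fixed one included, are
unpaired.  In a state \<open>U\<close> of the process (its set of unpaired devices) the infected devices still
to choose are those below \<open>I\<close>, the clean ones those from \<open>I\<close> on.
\<close>

fun infection_prob :: "nat \<Rightarrow> nat \<Rightarrow> real" where
  "infection_prob 0 c = 0"
| "infection_prob (Suc a) 0 = 0"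
| "infection_prob (Suc a) (Suc c) =
     (real a * infection_prob (a - 1) (Suc c) + 1 + real c * infection_prob a c) / real (a + c + 1)"

definition infection_prob_of_state :: "nat \<Rightarrow> nat set \<Rightarrow> real" where
  "infection_prob_of_state I U = infection_prob (card {x\<in>U. x < I}) (card {x\<in>U. I \<le> x})"

lemma infection_prob_of_state_choose:
  assumes "finite U" "t \<in> U" "t < I" "w \<in> U" "I \<le> w"
  shows "infection_prob_of_state I U
           = (\<Sum>c\<in>U - {t}. if c = w then 1 else infection_prob_of_state I (U - {t, c})) / card (U - {t})"
proof -
  define A B where "A = {x\<in>U. x < I}" and "B = {x\<in>U. I \<le> x}"
  define f where "f c = (if c = w then 1 else infection_prob_of_state I (U - {t, c}))" for c
  have fin: "finite A" "finite B" using assms(1) by (simp_all add: A_def B_def)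
  have tA: "t \<in> A" and wB: "w \<in> B" using assms by (simp_all add: A_def B_def)
  then obtain a c where a: "card A = Suc a" and c: "card B = Suc c"
    using fin by (metis card_gt_0_iff empty_iff gr0_implies_Suc)
  have choices: "U - {t} = insert w ((A - {t}) \<union> (B - {w}))"
    using tA wB assms(3) by (auto simp: A_def B_def)
  have disj: "w \<notin> (A - {t}) \<union> (B - {w})" "(A - {t}) \<inter> (B - {w}) = {}"
    using assms(5) by (auto simp: A_def B_def)
  have "f x = infection_prob (a - 1) (Suc c)" if "x \<in> A - {t}" for x
  proof -
    have "{y\<in>U - {t, x}. y < I} = A - {t} - {x}" "{y\<in>U - {t, x}. I \<le> y} = B"
      using that assms(3) by (auto simp: A_def B_def)
    moreover have "card (A - {t} - {x}) = a - 1" using that tA a fin by simp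
    ultimately show ?thesis using that disj c by (auto simp: f_def infection_prob_of_state_def)
  qed
  then have sum_A: "(\<Sum>x\<in>A - {t}. f x) = real a * infection_prob (a - 1) (Suc c)"
    using tA a fin by simp
  have "f x = infection_prob a c" if "x \<in> B - {w}" for x
  proof -
    have "{y\<in>U - {t, x}. y < I} = A - {t}" "{y\<in>U - {t, x}. I \<le> y} = B - {x}"
      using that assms(3) by (auto simp: A_def B_def)
    moreover have "card (A - {t}) = a" "card (B - {x}) = c" using that tA a c fin by simp_all
    ultimately show ?thesis using that by (simp add: f_def infection_prob_of_state_def)
  qed
  then have sum_B: "(\<Sum>x\<in>B - {w}. f x) = real c * infection_prob a c"
    using wB c fin by simp
  have "(\<Sum>x\<in>U - {t}. f x) = 1 + real a * infection_prob (a - 1) (Suc c) + real c * infection_prob a c"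
    unfolding choices using fin disj sum_A sum_B by (simp add: sum.union_disjoint f_def)
  moreover have "card (U - {t}) = a + c + 1"
    unfolding choices using fin a c tA wB disj by (simp add: card_Un_disjoint)
  ultimately show ?thesis
    unfolding f_def[symmetric] by (simp add: infection_prob_of_state_def A_def[symmetric] B_def[symmetric] a c algebra_simps)
qed

lemma prob_pairing_run_infection_prob:
  assumes "finite U" "U \<subseteq> {t..}" "w \<in> U" "I \<le> w" "t \<le> I"
  shows "measure_pmf.prob (pairing_run [t..<I] U) {V. w \<notin> V} = infection_prob_of_state I U"
  using assms
proof (induction "I - t" arbitrary: t U)
  case 0
  then have "[t..<I] = []" "{x\<in>U. x < I} = {}" by auto
  with \<open>w \<in> U\<close> show ?case
    by (simp only: pairing_run.simps card.empty infection_prob.simps infection_prob_of_state_def) simp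
next
  case (Suc n)
  then have "t < I" by simp
  then have run: "[t..<I] = t # [Suc t..<I]" by (simp add: upt_conv_Cons)
  have rest: "finite (U - {t, c})" "U - {t, c} \<subseteq> {Suc t..}" for c
    using Suc.prems(1,2) by (auto simp: Suc_le_eq order.order_iff_strict)
  have IH: "measure_pmf.prob (pairing_run [Suc t..<I] U') {V. w \<notin> V} = infection_prob_of_state I U'"
    if "finite U'" "U' \<subseteq> {Suc t..}" "w \<in> U'" for U'
    using Suc.hyps(1)[of "Suc t" U'] Suc.hyps(2) Suc.prems that by simp
  show ?case
  proof (cases "t \<in> U")
    case False
    then have "U \<subseteq> {Suc t..}" using Suc.prems(2) by (auto simp: Suc_le_eq order.order_iff_strict)
    then show ?thesis unfolding run prob_pairing_run_skip[OF False] using IH Suc.prems by simp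
  next
    case True
    have "w \<in> U - {t}" using Suc.prems(3,4) \<open>t < I\<close> by auto
    then have "measure_pmf.prob (pairing_run [t..<I] U) {V. w \<notin> V}
        = (\<Sum>c\<in>U - {t}. measure_pmf.prob (pairing_run [Suc t..<I] (U - {t, c})) {V. w \<notin> V}) / card (U - {t})"
      unfolding run using True Suc.prems(1) by (intro prob_pairing_run_choose) auto
    also have "\<dots> = (\<Sum>c\<in>U - {t}. if c = w then 1 else infection_prob_of_state I (U - {t, c})) / card (U - {t})"
      using rest \<open>w \<in> U - {t}\<close> by (intro arg_cong2[where f = "(/)"] sum.cong) (auto simp: IH prob_pairing_run_paired)
    also have "\<dots> = infection_prob_of_state I U"
      using infection_prob_of_state_choose[OF Suc.prems(1) True \<open>t < I\<close> Suc.prems(3,4)] by simp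
    finally show ?thesis .
  qed
qed

lemma P_infect_eq_infection_prob:
  assumes "I \<le> w" "w < I + S"
  shows "P_infect I S w = infection_prob I S"
proof -
  have "{x\<in>{0..<I+S}. x < I} = {0..<I}" "{x\<in>{0..<I+S}. I \<le> x} = {I..<I+S}" by auto
  then show ?thesis
    using prob_pairing_run_infection_prob[of "{0..<I+S}" 0 w I] assms
    by (simp add: P_infect_def pairing_process_eq_run infection_prob_of_state_def)
qed

section \<open>An explicit solution of the recursion\<close>

text \<open>
The number of ways to pair \<open>2 j\<close> of \<open>I\<close> infected devices among themselves and each of the
remaining \<open>I - 2 j\<close> with a distinct one of \<open>S\<close> clean devices.
\<close>

definition matching_count :: "nat \<Rightarrow> nat \<Rightarrow> nat \<Rightarrow> real" where
  "matching_count I S j =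
     (if 2 * j \<le> I \<and> I - 2 * j \<le> S
      then fact I * fact S / (2 ^ j * fact j * fact (I - 2 * j) * fact (S - (I - 2 * j)))
      else 0)"

lemma matching_count_eq:
  "matching_count (2 * j + m) (m + r) j = fact (2 * j + m) * fact (m + r) / (2 ^ j * fact j * fact m * fact r)"
  by (simp add: matching_count_def)

text \<open>
Classifying matchings by the partner of the first infected device: it is infected in a
fraction \<open>2 j / (I + 1)\<close> of them and clean in the rest.
\<close>

lemma matching_count_pair_step:
  "real (Suc I) * real I * (if j = 0 then 0 else matching_count (I - 1) S (j - 1))
     = real (2 * j) * matching_count (Suc I) S j"
proof (cases "j = 0 \<or> I = 0")
  case True
  then show ?thesis by (auto simp: matching_count_def)
next
  case False
  then obtain j' I' where j': "j = Suc j'" and I': "I = Suc I'" by (metis not0_implies_Suc)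
  show ?thesis
  proof (cases "2 * j' \<le> I' \<and> I' - 2 * j' \<le> S")
    case True
    then obtain m r where m: "I' = 2 * j' + m" and r: "S = m + r" by (metis le_add_diff_inverse)
    define F :: real where "F = fact (m + r) / (2 ^ j' * fact j' * fact m * fact r)"
    have "matching_count (I - 1) S (j - 1) = fact (2 * j' + m) * F"
      using matching_count_eq[of j' m r] j' I' m r by (simp add: F_def)
    moreover have "matching_count (Suc I) S j = fact (2 * j' + m + 2) * F / (2 * real (Suc j'))"
      using matching_count_eq[of "Suc j'" m r] j' I' m r by (simp add: F_def field_simps)
    moreover have "(fact (2 * j' + m + 2) :: real) = real (2 * j' + m + 2) * real (2 * j' + m + 1) * fact (2 * j' + m)"
      by (simp add: algebra_simps)
    ultimately show ?thesis using j' I' m by (simp add: field_simps)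
  next
    case False
    then show ?thesis using j' I' by (auto simp: matching_count_def)
  qed
qed

lemma matching_count_clean_step:
  "real (Suc I) * real S * matching_count I (S - 1) j
     = real (Suc I - 2 * j) * matching_count (Suc I) S j"
proof (cases "S = 0 \<or> \<not> (2 * j \<le> I \<and> I - 2 * j < S)")
  case True
  then show ?thesis by (auto simp: matching_count_def)
next
  case False
  then obtain m r where m: "I = 2 * j + m" and r: "S = Suc (m + r)"
    by (metis le_add_diff_inverse less_imp_Suc_add)
  define F :: real where "F = fact (2 * j + m) / (2 ^ j * fact j * fact m * fact r)"
  have "matching_count I (S - 1) j = fact (m + r) * F"
    using matching_count_eq[of j m r] m r by (simp add: F_def)
  moreover have "matching_count (Suc I) S j = real (Suc (2 * j + m)) * real (Suc (m + r)) * fact (m + r) * F / real (Suc m)"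
    using matching_count_eq[of j "Suc m" r] m r by (simp add: F_def field_simps)
  ultimately show ?thesis using m r by (simp add: Suc_diff_le)
qed

lemma matching_count_rec:
  "matching_count (Suc I) S j
     = real I * (if j = 0 then 0 else matching_count (I - 1) S (j - 1)) + real S * matching_count I (S - 1) j"
proof -
  have "real (Suc I) * (real I * (if j = 0 then 0 else matching_count (I - 1) S (j - 1))
          + real S * matching_count I (S - 1) j)
        = real (2 * j + (Suc I - 2 * j)) * matching_count (Suc I) S j"
    unfolding distrib_left mult.assoc[symmetric] matching_count_pair_step matching_count_clean_step
    by (simp add: algebra_simps)
  also have "\<dots> = real (Suc I) * matching_count (Suc I) S j"
    by (cases "2 * j \<le> Suc I") (simp_all add: matching_count_def)
  finally show ?thesis by simp
qed

text \<open>
\<open>(n - 1) (n - 3) \<cdots> (n - 2 s + 1)\<close>: the number of equally likely outcomes of \<open>s\<close> successive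
choices starting from \<open>n\<close> unpaired devices.
\<close>

definition choice_product :: "nat \<Rightarrow> nat \<Rightarrow> real" where
  "choice_product n s = (\<Prod>k<s. real n - 1 - 2 * real k)"

lemma choice_product_Suc: "choice_product (Suc n) (Suc s) = real n * choice_product (n - 1) s"
  unfolding choice_product_def prod.lessThan_Suc_shift
  by (cases n) (simp_all add: algebra_simps)

text \<open>
\<open>regular_prob I S j\<close> is the probability that the process ends with exactly \<open>j\<close> pairs of infected devices
and every infected device paired; \<open>leftover_prob I S\<close>, below, is the probability that every
clean device is infected and one infected device stays unpaired, which needs \<open>I = S + 1 + 2 j\<close>.
\<close>

definition regular_prob :: "nat \<Rightarrow> nat \<Rightarrow> nat \<Rightarrow> real" where
  "regular_prob I S j = matching_count I S j / choice_product (I + S) (I - j)"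

lemma regular_prob_rec:
  "real (I + S) * regular_prob (Suc I) S j
     = real I * (if j = 0 then 0 else regular_prob (I - 1) S (j - 1)) + real S * regular_prob I (S - 1) j"
proof (cases "j \<le> I")
  case True
  define E where "E = choice_product (I + S - 1) (I - j)"
  have "choice_product (Suc I + S) (Suc I - j) = real (I + S) * E"
    using True by (simp add: E_def Suc_diff_le choice_product_Suc)
  then have "real (I + S) * regular_prob (Suc I) S j = matching_count (Suc I) S j / E"
    by (cases "I + S = 0") (simp_all add: regular_prob_def matching_count_def[of "Suc 0"] flip: of_nat_add)
  moreover have "real I * (if j = 0 then 0 else regular_prob (I - 1) S (j - 1))
      = real I * (if j = 0 then 0 else matching_count (I - 1) S (j - 1)) / E"
    by (cases "I = 0") (auto simp: regular_prob_def E_def)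
  moreover have "real S * regular_prob I (S - 1) j = real S * matching_count I (S - 1) j / E"
    by (cases "S = 0") (auto simp: regular_prob_def E_def)
  ultimately show ?thesis by (simp add: matching_count_rec add_divide_distrib)
next
  case False
  then show ?thesis by (auto simp: regular_prob_def matching_count_def)
qed

definition leftover_count :: "nat \<Rightarrow> nat \<Rightarrow> real" where
  "leftover_count S j = (\<Sum>i\<le>j. fact (S + j + i) / (2 ^ i * fact i))"

lemma sum_fact_div_telescope:
  "(\<Sum>i<n. (real a + 1 - real i) * (fact (a + i) / (2 ^ i * fact i)))
     = 2 * real n * (fact (a + n) / (2 ^ n * fact n) :: real)"
proof (induction n)
  case (Suc n)
  define u where "u = (fact (a + n) / (2 ^ n * fact n) :: real)"
  have "(fact (a + Suc n) / (2 ^ Suc n * fact (Suc n)) :: real) = (real a + 1 + real n) * u / (2 * (real n + 1))"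
    by (simp add: u_def algebra_simps)
  moreover have "(\<Sum>i<Suc n. (real a + 1 - real i) * (fact (a + i) / (2 ^ i * fact i)))
      = 2 * real n * u + (real a + 1 - real n) * u"
    using Suc.IH unfolding u_def by simp
  ultimately show ?case by (simp add: field_simps)
qed simp

lemma leftover_count_Suc:
  "leftover_count S (Suc j) = real (S + 2 * Suc j) * leftover_count S j + real S * leftover_count (S - 1) (Suc j)"
proof -
  define u :: "nat \<Rightarrow> real" where "u i = fact (S + j + i) / (2 ^ i * fact i)" for i
  have "(\<Sum>i\<le>j. (real S + real j + 1 - real i) * u i) = 2 * real (Suc j) * u (Suc j)"
    using sum_fact_div_telescope[of "S + j" "Suc j"] by (simp add: u_def lessThan_Suc_atMost add.assoc)
  then have "(\<Sum>i\<le>Suc j. (real j + 1 + real i) * u i)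
      = (\<Sum>i\<le>j. (real j + 1 + real i) * u i) + (\<Sum>i\<le>j. (real S + real j + 1 - real i) * u i)"
    by simp
  also have "\<dots> = (\<Sum>i\<le>j. real (S + 2 * Suc j) * u i)"
    by (simp add: sum.distrib[symmetric] algebra_simps)
  also have "\<dots> = real (S + 2 * Suc j) * leftover_count S j"
    by (simp add: leftover_count_def u_def sum_distrib_left)
  finally have main: "(\<Sum>i\<le>Suc j. (real j + 1 + real i) * u i) = real (S + 2 * Suc j) * leftover_count S j" .
  have "leftover_count S (Suc j) = (\<Sum>i\<le>Suc j. (real S + (real j + 1 + real i)) * u i)"
    unfolding leftover_count_def u_def by (intro sum.cong) (simp_all add: algebra_simps del: sum.atMost_Suc)
  also have "\<dots> = (\<Sum>i\<le>Suc j. (real j + 1 + real i) * u i) + real S * (\<Sum>i\<le>Suc j. u i)"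
    by (simp only: distrib_right sum.distrib sum_distrib_left)
  also have "real S * (\<Sum>i\<le>Suc j. u i) = real S * leftover_count (S - 1) (Suc j)"
    by (cases S) (simp_all add: leftover_count_def u_def del: sum.atMost_Suc)
  finally show ?thesis unfolding main .
qed

lemma leftover_count_rec:
  assumes "S + j \<noteq> 0"
  shows "leftover_count S j
           = (if j = 0 then 0 else real (S + 2 * j) * leftover_count S (j - 1)) + real S * leftover_count (S - 1) j"
proof (cases j)
  case 0
  with assms show ?thesis by (cases S) (simp_all add: leftover_count_def)
next
  case (Suc j')
  then show ?thesis using leftover_count_Suc[of S j'] by simp
qed

definition leftover_prob :: "nat \<Rightarrow> nat \<Rightarrow> real" where
  "leftover_prob I S =
     (if \<exists>j. I = S + 1 + 2 * j
      then leftover_count S ((I - S - 1) div 2) / choice_product (I + S) ((I + S - 1) div 2)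
      else 0)"

lemma leftover_prob_eq:
  "leftover_prob (S + 1 + 2 * j) S = leftover_count S j / choice_product (S + 1 + 2 * j + S) (S + j)"
  by (simp add: leftover_prob_def)

lemma leftover_prob_eq_0: "(\<And>j. I \<noteq> S + 1 + 2 * j) \<Longrightarrow> leftover_prob I S = 0"
  by (simp add: leftover_prob_def)

lemma leftover_prob_rec:
  "real (I + S) * leftover_prob (Suc I) S = real I * leftover_prob (I - 1) S + real S * leftover_prob I (S - 1)"
proof (cases "\<exists>j. I = S + 2 * j")
  case True
  then obtain j where I: "I = S + 2 * j" by blast
  show ?thesis
  proof (cases "S + j = 0")
    case False
    define E where "E = choice_product (I + S - 1) (S + j - 1)"
    have "choice_product (Suc I + S) (S + j) = real (I + S) * E"
      using False choice_product_Suc[of "I + S" "S + j - 1"] by (simp add: E_def)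
    moreover have "leftover_prob (Suc I) S = leftover_count S j / choice_product (Suc I + S) (S + j)"
      using leftover_prob_eq[of S j] I by simp
    moreover have "real (I + S) \<noteq> 0" using False I by (simp del: of_nat_add)
    ultimately have "real (I + S) * leftover_prob (Suc I) S = leftover_count S j / E"
      by (simp only: mult_divide_mult_cancel_left_if) simp
    moreover have "real I * leftover_prob (I - 1) S
        = (if j = 0 then 0 else real (S + 2 * j) * leftover_count S (j - 1)) / E"
    proof (cases j)
      case 0
      then show ?thesis using I by (cases S) (simp_all add: leftover_prob_eq_0)
    next
      case (Suc j')
      then show ?thesis
        using leftover_prob_eq[of S j'] I by (simp add: E_def algebra_simps)
    qed
    moreover have "real S * leftover_prob I (S - 1) = real S * leftover_count (S - 1) j / E"
      using leftover_prob_eq[of "S - 1" j] I by (cases S) (simp_all add: E_def algebra_simps)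
    ultimately show ?thesis
      using leftover_count_rec[OF False] by (simp add: add_divide_distrib)
  qed (use I in simp)
next
  case False
  have "I - 1 \<noteq> S + 1 + 2 * j" if "I \<noteq> 0" for j
  proof
    assume "I - 1 = S + 1 + 2 * j"
    then have "I = S + 2 * Suc j" using that by simp
    with False show False by blast
  qed
  moreover have "I \<noteq> (S - 1) + 1 + 2 * j" if "S \<noteq> 0" for j
    using False that by auto
  moreover have "Suc I \<noteq> S + 1 + 2 * j" for j
    using False by auto
  ultimately show ?thesis
    by (cases "I = 0"; cases "S = 0") (simp_all add: leftover_prob_eq_0)
qed

lemma regular_prob_eq_0: "I < 2 * j \<Longrightarrow> regular_prob I S j = 0"
  by (simp add: regular_prob_def matching_count_def)

lemma sum_regular_prob_extend:
  "I \<le> n \<Longrightarrow> (\<Sum>j\<le>n. f j * regular_prob I S j) = (\<Sum>j\<le>I. f j * regular_prob I S j)"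
  by (rule sum.mono_neutral_right) (auto simp: regular_prob_eq_0)

lemma sum_regular_prob_shift:
  "(\<Sum>j\<le>Suc I. f j * (if j = 0 then 0 else regular_prob (I - 1) S (j - 1)))
     = (\<Sum>j\<le>I - 1. f (Suc j) * regular_prob (I - 1) S j)"
proof -
  have "(\<Sum>j\<le>Suc I. f j * (if j = 0 then 0 else regular_prob (I - 1) S (j - 1)))
      = (\<Sum>j\<le>I. f (Suc j) * regular_prob (I - 1) S j)"
    by (simp add: sum.atMost_Suc_shift del: sum.atMost_Suc)
  also have "\<dots> = (\<Sum>j\<le>I - 1. f (Suc j) * regular_prob (I - 1) S j)"
    by (rule sum_regular_prob_extend) simp
  finally show ?thesis .
qed

definition total_prob :: "nat \<Rightarrow> nat \<Rightarrow> real" where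
  "total_prob I S = (\<Sum>j\<le>I. regular_prob I S j) + leftover_prob I S"

definition expected_infected :: "nat \<Rightarrow> nat \<Rightarrow> real" where
  "expected_infected I S = (\<Sum>j\<le>I. (real I - 2 * real j) * regular_prob I S j) + real S * leftover_prob I S"

lemma sum_regular_prob_rec:
  "real (I + S) * (\<Sum>j\<le>Suc I. regular_prob (Suc I) S j)
     = real I * (\<Sum>j\<le>I - 1. regular_prob (I - 1) S j) + real S * (\<Sum>j\<le>I. regular_prob I (S - 1) j)"
proof -
  have "real (I + S) * (\<Sum>j\<le>Suc I. regular_prob (Suc I) S j)
      = real I * (\<Sum>j\<le>Suc I. (if j = 0 then 0 else regular_prob (I - 1) S (j - 1)))
        + real S * (\<Sum>j\<le>Suc I. regular_prob I (S - 1) j)"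
    unfolding sum_distrib_left regular_prob_rec sum.distrib ..
  then show ?thesis
    using sum_regular_prob_shift[of "\<lambda>_. 1" I S] sum_regular_prob_extend[of I "Suc I" "\<lambda>_. 1" "S - 1"]
    by (simp del: sum.atMost_Suc)
qed

lemma sum_weighted_regular_prob_rec:
  "real (I + S) * (\<Sum>j\<le>Suc I. (real (Suc I) - 2 * real j) * regular_prob (Suc I) S j)
     = real I * (\<Sum>j\<le>I - 1. (real (I - 1) - 2 * real j) * regular_prob (I - 1) S j)
       + real S * (\<Sum>j\<le>I. (real I - 2 * real j) * regular_prob I (S - 1) j)
       + real S * (\<Sum>j\<le>I. regular_prob I (S - 1) j)"
proof -
  have "real (I + S) * (\<Sum>j\<le>Suc I. (real (Suc I) - 2 * real j) * regular_prob (Suc I) S j)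
      = (\<Sum>j\<le>Suc I. (real (Suc I) - 2 * real j) * (real (I + S) * regular_prob (Suc I) S j))"
    by (simp add: sum_distrib_left mult.left_commute del: sum.atMost_Suc)
  also have "\<dots> = (\<Sum>j\<le>Suc I. real I * ((real (Suc I) - 2 * real j) * (if j = 0 then 0 else regular_prob (I - 1) S (j - 1)))
        + real S * ((real I - 2 * real j) * regular_prob I (S - 1) j) + real S * (1 * regular_prob I (S - 1) j))"
    unfolding regular_prob_rec by (intro sum.cong) (simp_all add: algebra_simps)
  also have "\<dots> = real I * (\<Sum>j\<le>Suc I. (real (Suc I) - 2 * real j) * (if j = 0 then 0 else regular_prob (I - 1) S (j - 1)))
        + real S * (\<Sum>j\<le>Suc I. (real I - 2 * real j) * regular_prob I (S - 1) j)
        + real S * (\<Sum>j\<le>Suc I. 1 * regular_prob I (S - 1) j)"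
    by (simp only: sum.distrib sum_distrib_left)
  also have "\<dots> = real I * (\<Sum>j\<le>I - 1. (real (I - 1) - 2 * real j) * regular_prob (I - 1) S j)
       + real S * (\<Sum>j\<le>I. (real I - 2 * real j) * regular_prob I (S - 1) j)
       + real S * (\<Sum>j\<le>I. regular_prob I (S - 1) j)"
    unfolding sum_regular_prob_shift sum_regular_prob_extend[OF le_SucI[OF order.refl]]
    by (cases "I = 0") (simp_all add: algebra_simps)
  finally show ?thesis .
qed

lemma total_prob_rec:
  "real (I + S) * total_prob (Suc I) S = real I * total_prob (I - 1) S + real S * total_prob I (S - 1)"
  using sum_regular_prob_rec[of I S] leftover_prob_rec[of I S] by (simp add: total_prob_def algebra_simps)

lemma total_prob_eq_1: "total_prob I S = 1"
proof (induction I arbitrary: S rule: less_induct)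
  case (less I)
  show ?case
  proof (cases I)
    case 0
    then show ?thesis
      by (simp add: total_prob_def regular_prob_def matching_count_def choice_product_def leftover_prob_eq_0)
  next
    case (Suc a)
    show ?thesis
    proof (cases "a + S = 0")
      case True
      then show ?thesis
        using Suc leftover_prob_eq[of 0 0]
        by (simp add: total_prob_def regular_prob_def matching_count_def leftover_count_def choice_product_def)
    next
      case False
      have "real (a + S) * total_prob I S = real a * total_prob (a - 1) S + real S * total_prob a (S - 1)"
        unfolding Suc by (rule total_prob_rec)
      also have "\<dots> = real (a + S)" using less Suc by simp
      finally show ?thesis using False by simp
    qed
  qed
qed

lemma expected_infected_rec:
  assumes "S \<ge> 1"
  shows "real (I + S) * expected_infected (Suc I) S
           = real I * expected_infected (I - 1) S + real S * expected_infected I (S - 1) + real S"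
proof -
  define A where "A = (\<Sum>j\<le>Suc I. (real (Suc I) - 2 * real j) * regular_prob (Suc I) S j)"
  define B where "B = (\<Sum>j\<le>I - 1. (real (I - 1) - 2 * real j) * regular_prob (I - 1) S j)"
  define C where "C = (\<Sum>j\<le>I. (real I - 2 * real j) * regular_prob I (S - 1) j)"
  define D where "D = (\<Sum>j\<le>I. regular_prob I (S - 1) j)"
  have main: "real (I + S) * A = real I * B + real S * C + real S * D"
    unfolding A_def B_def C_def D_def by (rule sum_weighted_regular_prob_rec)
  have total: "D + leftover_prob I (S - 1) = 1"
    using total_prob_eq_1[of I "S - 1"] by (simp add: D_def total_prob_def)
  have "real (I + S) * expected_infected (Suc I) S
      = real (I + S) * A + real S * (real (I + S) * leftover_prob (Suc I) S)"
    by (simp add: expected_infected_def A_def algebra_simps del: sum.atMost_Suc)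
  also have "\<dots> = real I * (B + real S * leftover_prob (I - 1) S)
      + real S * (C + (real S - 1) * leftover_prob I (S - 1)) + real S * (D + leftover_prob I (S - 1))"
    unfolding main leftover_prob_rec by (simp add: algebra_simps)
  also have "\<dots> = real I * expected_infected (I - 1) S + real S * expected_infected I (S - 1) + real S"
    using assms total by (simp add: expected_infected_def B_def C_def)
  finally show ?thesis .
qed

lemma infection_prob_eq_expected_infected: "real S * infection_prob I S = expected_infected I S"
proof (induction I arbitrary: S rule: less_induct)
  case (less I)
  show ?case
  proof (cases "I = 0 \<or> S = 0")
    case True
    have term_0: "(real I - 2 * real j) * regular_prob I 0 j = 0" for j
      by (cases "2 * j = I") (auto simp: regular_prob_def matching_count_def)
    have "(\<Sum>j\<le>I. (real I - 2 * real j) * regular_prob I 0 j) = 0"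
      by (simp only: term_0 sum.neutral_const)
    with True show ?thesis
      by (auto simp: expected_infected_def leftover_prob_eq_0)
  next
    case False
    then obtain a c where I: "I = Suc a" and S: "S = Suc c" by (metis not0_implies_Suc)
    have "real (a + S) * (real S * infection_prob I S)
        = real a * (real S * infection_prob (a - 1) S) + real S * (real c * infection_prob a c) + real S"
      using I S by (simp add: field_simps)
    also have "\<dots> = real a * expected_infected (a - 1) S + real S * expected_infected a c + real S"
      using less.IH[of "a - 1" S] less.IH[of a c] I S by simp
    also have "\<dots> = real (a + S) * expected_infected I S"
      using expected_infected_rec[of S a] I S by simp
    finally show ?thesis using S by simp
  qed
qed

section \<open>The closed form\<close>

lemma prod_int_atLeast0_atMost_pred: "(\<Prod>k\<in>{0..int n - 1}. f k) = (\<Prod>k<n. f (int k))"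
proof -
  have "{0..int n - 1} = int ` {..<n}"
    by (auto simp: image_iff intro!: bexI[where x = "nat _"])
  then show ?thesis by (simp add: prod.reindex)
qed

lemma prod_int_atLeast1_atMost: "(\<Prod>k\<in>{1..int n}. f k) = (\<Prod>k<n. f (int k + 1))"
proof -
  have "{1..int n} = int ` {1..n}" by (simp add: image_int_atLeastAtMost)
  then show ?thesis by (simp add: prod.reindex prod.atLeast1_atMost_eq) (simp add: add.commute)
qed

lemma c2_eq: "c2 x = x * (x - 1) / 2"
  by (simp add: c2_def gbinomial_Suc numeral_2_eq_2)

lemma prod_c2_eq_fact: "(\<Prod>k<n. c2 (real (m + 2 * n) - 2 * real k)) = fact (m + 2 * n) / (fact m * 2 ^ n)"
proof (induction n)
  case (Suc n)
  have "(\<Prod>k<Suc n. c2 (real (m + 2 * Suc n) - 2 * real k))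
      = c2 (real (m + 2 * n) + 2) * (\<Prod>k<n. c2 (real (m + 2 * n) - 2 * real k))"
    unfolding prod.lessThan_Suc_shift by (simp add: algebra_simps)
  also have "\<dots> = (real (m + 2 * n) + 2) * (real (m + 2 * n) + 1) / 2 * (fact (m + 2 * n) / (fact m * 2 ^ n))"
    unfolding Suc.IH by (simp add: c2_eq algebra_simps)
  also have "\<dots> = fact (m + 2 * Suc n) / (fact m * 2 ^ Suc n)"
    by (simp add: field_simps)
  finally show ?case .
qed simp

lemma prod_falling_eq_fact: "(\<Prod>k<n. real (a + n) - real k) = fact (a + n) / fact a"
proof (induction n)
  case (Suc n)
  have "(\<Prod>k<Suc n. real (a + Suc n) - real k) = real (a + Suc n) * (\<Prod>k<n. real (a + n) - real k)"
    unfolding prod.lessThan_Suc_shift by simp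
  with Suc.IH show ?case by (simp add: fact_Suc[of "a + n"] del: fact_Suc)
qed simp

lemma dagger_iff: "dagger I S j \<longleftrightarrow> I = S + 1 + 2 * j"
  unfolding dagger_def by auto

text \<open>In the dagger case the last infected device finds nobody to choose.\<close>

lemma piF_eq:
  assumes "j \<le> I"
  shows "piF I S j = 1 / choice_product (I + S) (I - j - (if dagger I S j then 1 else 0))"
proof -
  define n where "n = I - j - (if dagger I S j then 1 else 0)"
  have r: "int I - int j - 1 - zz I S j = int n - 1"
    using assms by (auto simp: n_def zz_def dagger_iff)
  have "piF I S j = (\<Prod>k<n. 1 / real_of_int (int I + int S - 1 - 2 * int k))"
    unfolding piF_def r prod_int_atLeast0_atMost_pred ..
  then show ?thesis
    unfolding n_def[symmetric] choice_product_def by (simp add: prod_dividef[of "\<lambda>_. 1", simplified])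
qed

lemma NF_eq:
  assumes "\<not> dagger I S j" "2 * j \<le> I"
  shows "NF I S j = fact I / (fact j * fact (I - 2 * j) * 2 ^ j)"
proof -
  have "(\<Prod>k\<in>{1..j}. c2 (real I - 2 * (real k - 1))) = (\<Prod>k<j. c2 (real I - 2 * real k))"
    by (simp add: prod.atLeast1_atMost_eq algebra_simps)
  moreover have "(\<Prod>k<j. c2 (real I - 2 * real k)) = fact I / (fact (I - 2 * j) * 2 ^ j)"
    using prod_c2_eq_fact[of "I - 2 * j" j] assms(2) by simp
  ultimately show ?thesis
    using assms(1) by (simp add: NF_def)
qed

lemma MF_eq:
  assumes "\<not> dagger I S j" "I = 2 * j + Suc m" "S \<ge> 1"
  shows "MF I S j = fact (Suc m) * real ((S - 1) choose m)"
proof -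
  have "int I - 1 - 2 * int j = int m" "int S - 1 = int (S - 1)" "I - 2 * j = Suc m" using assms by simp_all
  then show ?thesis using assms(1) unfolding MF_def binomZ_def binomial_gbinomial by (simp del: of_nat_diff)
qed

lemma NF_MF_eq:
  assumes "\<not> dagger I S j" "2 * j \<le> I" "S \<ge> 1"
  shows "NF I S j * MF I S j = (real I - 2 * real j) / real S * matching_count I S j"
proof (cases "I = 2 * j")
  case True
  then show ?thesis using assms(1) by (simp add: MF_def binomZ_def)
next
  case False
  then obtain m where m: "I - 2 * j = Suc m" using assms(2) by (cases "I - 2 * j") auto
  then have I: "I = 2 * j + Suc m" using assms(2) by simp
  show ?thesis
  proof (cases "Suc m \<le> S")
    case True
    then obtain r where S: "S = Suc m + r" by (metis le_add_diff_inverse)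
    define F :: real where "F = fact I / (fact j * 2 ^ j * fact m * fact r)"
    have nf: "NF I S j = F * fact r / real (Suc m)"
      using assms(1,2) m by (simp add: NF_eq F_def field_simps)
    have "real ((S - 1) choose m) = fact (m + r) / (fact m * fact r)"
      using S by (simp add: binomial_fact)
    then have mf: "MF I S j = real (Suc m) * fact (m + r) / fact r"
      using MF_eq[OF assms(1) I assms(3)] by simp
    have "matching_count I S j = fact I * fact (Suc m + r) / (2 ^ j * fact j * fact (Suc m) * fact r)"
      unfolding I S by (rule matching_count_eq)
    then have mc: "matching_count I S j = F * fact (m + r) * real (Suc (m + r)) / real (Suc m)"
      by (simp add: F_def field_simps)
    have "NF I S j * MF I S j = F * fact (m + r)"
      unfolding nf mf by (simp del: of_nat_Suc)
    moreover have "real I - 2 * real j = real (Suc m)" "real S = real (Suc (m + r))" using I S by simp_all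
    then have "(real I - 2 * real j) / real S * matching_count I S j = F * fact (m + r)"
      unfolding mc by (simp del: of_nat_Suc)
    ultimately show ?thesis by simp
  next
    case False
    then have "(S - 1) choose m = 0" using assms(3) by simp
    then show ?thesis using MF_eq[OF assms(1) I assms(3)] False I by (simp add: matching_count_def)
  qed
qed

lemma Ndag_top:
  assumes "I = S + 1 + 2 * j"
  shows "Ndag I S j I = fact (S + 2 * j) / (2 ^ j * fact j * fact S)"
proof -
  have "(\<Prod>k\<in>{0..int j - 1}. c2 (real I - 1 - 2 * real_of_int k)) = fact (S + 2 * j) / (fact S * 2 ^ j)"
    unfolding prod_int_atLeast0_atMost_pred using prod_c2_eq_fact[of S j] assms by simp
  then show ?thesis unfolding Ndag_def by simp
qed

lemma Ndag_below_top:
  assumes "I = S + 1 + 2 * j" "1 \<le> j"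
  shows "Ndag I S j (I - 1) = fact (S + 2 * j - 1) / (2 ^ (j - 1) * fact (j - 1) * fact S)"
proof -
  define n where "n = j - 1"
  have j: "j = Suc n" using assms(2) by (simp add: n_def)
  have bound: "int j - 2 = int n - 1" using j by simp
  have prod: "(\<Prod>k\<in>{0..int j - 2}. c2 (real I - 3 - 2 * real_of_int k)) = fact (S + 2 * n) / (fact S * 2 ^ n)"
    unfolding bound prod_int_atLeast0_atMost_pred using prod_c2_eq_fact[of S n] assms(1) j by (simp add: algebra_simps)
  have "I - 1 \<noteq> I" using assms(1) by simp
  then have "Ndag I S j (I - 1)
      = 1 / fact n * (real I - 2) * (\<Prod>k\<in>{0..int j - 2}. c2 (real I - 3 - 2 * real_of_int k))"
    unfolding Ndag_def n_def by (simp only: if_False if_True simp_thms)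
  also have "\<dots> = fact (Suc (S + 2 * n)) / (2 ^ n * fact n * fact S)"
    unfolding prod using assms(1) j by (simp add: field_simps)
  finally show ?thesis using j by simp
qed

lemma Ndag_lower:
  assumes I: "I = S + 1 + 2 * j" and "i + 2 \<le> j"
  shows "Ndag I S j (S + 1 + j + i) = fact (S + j + i) / (2 ^ i * fact i * fact S)"
proof -
  define h where "h = S + 1 + j + i"
  have branch: "h \<noteq> I" "h \<noteq> I - 1" "\<not> j < I - h" using assms by (simp_all add: h_def)
  have bound1: "int I - int h = int (j - i)" using assms by (simp add: h_def)
  have falling: "(\<Prod>k\<in>{1..int I - int h}. real h - real_of_int k) = fact (S + j + i) / fact (S + 2 * i)"
  proof -
    have "(\<Prod>k\<in>{1..int I - int h}. real h - real_of_int k) = (\<Prod>k<j - i. real (S + 2 * i + (j - i)) - real k)"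
      unfolding bound1 prod_int_atLeast1_atMost using assms by (intro prod.cong) (simp_all add: h_def)
    also have "\<dots> = fact (S + j + i) / fact (S + 2 * i)"
      unfolding prod_falling_eq_fact using assms by (simp add: ac_simps)
    finally show ?thesis .
  qed
  show ?thesis
  proof (cases "i = 0")
    case True
    then have "Ndag I S j h = (\<Prod>k\<in>{1..int I - int h}. real h - real_of_int k)"
      using assms branch unfolding Ndag_def by (simp add: h_def)
    then show ?thesis using True falling by (simp add: h_def)
  next
    case False
    have bound2: "int j - int I + int h = int i" using assms by (simp add: h_def)
    have c2_prod: "(\<Prod>d\<in>{1..int j - int I + int h}. c2 (2 * real h - real I - 1 - 2 * (real_of_int d - 1)))
        = fact (S + 2 * i) / (fact S * 2 ^ i)"
      unfolding bound2 prod_int_atLeast1_atMost using prod_c2_eq_fact[of S i] assms by (simp add: h_def algebra_simps)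
    have "j - (I - h) = i" "j \<noteq> I - h" using assms False by (simp_all add: h_def)
    then have "Ndag I S j h = 1 / fact i * (\<Prod>k\<in>{1..int I - int h}. real h - real_of_int k)
        * (\<Prod>d\<in>{1..int j - int I + int h}. c2 (2 * real h - real I - 1 - 2 * (real_of_int d - 1)))"
      using branch unfolding Ndag_def by (simp only: if_False)
    also have "\<dots> = fact (S + j + i) / (2 ^ i * fact i * fact S)"
      unfolding falling c2_prod by (simp add: field_simps)
    finally show ?thesis by (simp add: h_def)
  qed
qed

lemma Ndag_eq:
  assumes "I = S + 1 + 2 * j" "i \<le> j"
  shows "Ndag I S j (S + 1 + j + i) = fact (S + j + i) / (2 ^ i * fact i * fact S)"
proof -
  consider "i = j" | "Suc i = j" | "i + 2 \<le> j" using assms(2) by linarith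
  then show ?thesis
  proof cases
    case 1
    then show ?thesis using Ndag_top[OF assms(1)] assms(1) by (simp add: mult_2 add.assoc)
  next
    case 2
    then have "S + 1 + j + i = I - 1" "S + 2 * j - 1 = S + j + i" "j - 1 = i" using assms(1) by simp_all
    then show ?thesis using Ndag_below_top[OF assms(1)] 2 by simp
  next
    case 3
    then show ?thesis using Ndag_lower[OF assms(1)] by simp
  qed
qed

lemma Ndag_eq_0:
  assumes "I = S + 1 + 2 * j" "1 \<le> j" "h \<le> S + j"
  shows "Ndag I S j h = 0"
  using assms by (simp add: Ndag_def)

lemma NF_dagger:
  assumes I: "I = S + 1 + 2 * j"
  shows "NF I S j = leftover_count S j / fact S"
proof -
  have d: "dagger I S j" using I by (simp add: dagger_iff)
  consider "j = 0" | "j = 1" | "2 \<le> j" by linarith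
  then show ?thesis
  proof cases
    case 1
    then show ?thesis using d by (simp add: NF_def leftover_count_def)
  next
    case 2
    have "(fact (S + 2) :: real) = real (S + 2) * real (S + 1) * fact S"
      by (simp add: numeral_2_eq_2 algebra_simps)
    then show ?thesis
      using d I 2 by (simp add: NF_def leftover_count_def c2_eq numeral_2_eq_2 field_simps)
  next
    case 3
    have "NF I S j = (\<Sum>h\<in>{S + 1..I}. Ndag I S j h)"
      using d 3 by (simp add: NF_def)
    also have "{S + 1..I} = {S + 1..S + j + Suc j}"
      using I by simp
    also have "(\<Sum>h\<in>{S + 1..S + j + Suc j}. Ndag I S j h)
        = (\<Sum>h\<in>{S + 1..S + j}. Ndag I S j h) + (\<Sum>h\<in>{0 + (S + 1 + j)..j + (S + 1 + j)}. Ndag I S j h)"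
      by (subst sum.ub_add_nat) (simp_all add: ac_simps)
    also have "\<dots> = (\<Sum>h\<in>{S + 1..S + j}. Ndag I S j h) + (\<Sum>i\<in>{0..j}. Ndag I S j (S + 1 + j + i))"
      unfolding sum.shift_bounds_cl_nat_ivl by (simp add: add.commute)
    also have "(\<Sum>h\<in>{S + 1..S + j}. Ndag I S j h) = 0"
      using I 3 by (intro sum.neutral) (simp add: Ndag_eq_0)
    also have "(\<Sum>i\<in>{0..j}. Ndag I S j (S + 1 + j + i)) = (\<Sum>i\<le>j. fact (S + j + i) / (2 ^ i * fact i) / fact S)"
      unfolding atLeast0AtMost by (intro sum.cong refl) (simp add: Ndag_eq[OF I, simplified])
    finally show ?thesis by (simp add: leftover_count_def sum_divide_distrib)
  qed
qed

lemma summand_regular: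
  assumes "\<not> dagger I S j" "2 * j \<le> I" "S \<ge> 1"
  shows "piF I S j * NF I S j * MF I S j = (real I - 2 * real j) / real S * regular_prob I S j"
proof -
  have "piF I S j = 1 / choice_product (I + S) (I - j)"
    using piF_eq[of j I S] assms(1,2) by simp
  then show ?thesis
    using NF_MF_eq[OF assms] by (simp add: regular_prob_def)
qed

lemma summand_dagger:
  assumes "I = S + 1 + 2 * j"
  shows "piF I S j * NF I S j * MF I S j = leftover_prob I S"
proof -
  have "piF I S j = 1 / choice_product (I + S) (S + j)"
    using piF_eq[of j I S] assms by (simp add: dagger_iff ac_simps)
  moreover have "MF I S j = fact S"
    using assms by (simp add: MF_def dagger_iff)
  moreover have "leftover_prob I S = leftover_count S j / choice_product (I + S) (S + j)"
    using leftover_prob_eq[of S j] assms by simp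
  ultimately show ?thesis
    by (simp add: NF_dagger[OF assms])
qed

lemma summand_eq:
  assumes "2 * j \<le> I" "S \<ge> 1"
  shows "piF I S j * NF I S j * MF I S j
           = (real I - 2 * real j) / real S * regular_prob I S j + (if dagger I S j then leftover_prob I S else 0)"
proof (cases "dagger I S j")
  case True
  then have "I = S + 1 + 2 * j" by (simp add: dagger_iff)
  moreover from this have "regular_prob I S j = 0" by (simp add: regular_prob_def matching_count_def)
  ultimately show ?thesis using summand_dagger True by simp
next
  case False
  then show ?thesis using summand_regular assms by simp
qed

lemma sum_summands_eq_expected_infected:
  assumes "S \<ge> 1"
  shows "(\<Sum>j\<in>{Lb I S..I div 2}. piF I S j * NF I S j * MF I S j) = expected_infected I S / real S"
proof -
  define A where "A = {Lb I S..I div 2}"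
  have "(\<Sum>j\<in>A. piF I S j * NF I S j * MF I S j)
      = (\<Sum>j\<in>A. (real I - 2 * real j) / real S * regular_prob I S j)
        + (\<Sum>j\<in>A. if dagger I S j then leftover_prob I S else 0)"
    unfolding sum.distrib[symmetric] by (intro sum.cong refl summand_eq assms) (auto simp: A_def)
  also have "(\<Sum>j\<in>A. (real I - 2 * real j) / real S * regular_prob I S j)
      = (\<Sum>j\<le>I. (real I - 2 * real j) / real S * regular_prob I S j)"
  proof (rule sum.mono_neutral_left)
    show "\<forall>j\<in>{..I} - A. (real I - 2 * real j) / real S * regular_prob I S j = 0"
      by (auto simp: A_def Lb_def regular_prob_def matching_count_def split: if_splits)
  qed (auto simp: A_def)
  also have "(\<Sum>j\<in>A. if dagger I S j then leftover_prob I S else 0) = leftover_prob I S"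
  proof (cases "\<exists>j. I = S + 1 + 2 * j")
    case True
    then obtain k where k: "I = S + 1 + 2 * k" by blast
    then have "dagger I S j \<longleftrightarrow> j = k" for j by (auto simp: dagger_iff)
    moreover have "k \<in> A" "finite A" using k by (simp_all add: A_def Lb_def)
    ultimately show ?thesis by simp
  next
    case False
    then show ?thesis by (simp add: dagger_iff leftover_prob_eq_0)
  qed
  also have "(\<Sum>j\<le>I. (real I - 2 * real j) / real S * regular_prob I S j) + leftover_prob I S
      = expected_infected I S / real S"
    using assms unfolding expected_infected_def by (simp add: sum_divide_distrib[symmetric] field_simps)
  finally show ?thesis by (simp add: A_def)
qed

theorem mainTheorem2:
  fixes I S w :: nat
  assumes "S \<ge> 1" and "I \<le> w" and "w < I + S"
  shows "P_infect I S w = (\<Sum>j\<in>{Lb I S..I div 2}. piF I S j * NF I S j * MF I S j)"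
proof -
  have "P_infect I S w = infection_prob I S"
    using assms(2,3) by (rule P_infect_eq_infection_prob)
  also have "\<dots> = expected_infected I S / real S"
    using infection_prob_eq_expected_infected[of S I] assms(1) by (simp add: field_simps)
  also have "\<dots> = (\<Sum>j\<in>{Lb I S..I div 2}. piF I S j * NF I S j * MF I S j)"
    using sum_summands_eq_expected_infected[OF assms(1)] by simp
  finally show ?thesis .
qed

end
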